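(* Let $\pi,\pi'$ be vertices of a Rauzy class $\mathcal{R}$ on the alphabet $\mathcal{A}$. Let $G\subseteq\mathrm{Sp}(\Omega_\pi,\mathbb{Z})$ be the subgroup generated by the symplectic transvections $\{T_{e_\alpha}\}_{\alpha\in\mathcal{A}}$ with respect to $\Omega_\pi$, and $G'\subseteq\mathrm{Sp}(\Omega_{\pi'},\mathbb{Z})$ the subgroup generated by $\{T'_{e_\alpha}\}_{\alpha\in\mathcal{A}}$ with respect to $\Omega_{\pi'}$. If $\gamma$ is any walk (using arrows of $\mathcal{R}$ and their reverses) from $\pi$ to $\pi'$, then the isomorphism $\mathrm{Sp}(\Omega_\pi,\mathbb{Z})\to\mathrm{Sp}(\Omega_{\pi'},\mathbb{Z})$, $S\mapsto B_\gamma SB_\gamma^{-1}$, restricts to an isomorphism between $G$ and $G'$.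
   Context: Permutations $\pi=(\pi_{\mathrm t},\pi_{\mathrm b})$ are pairs of bijections $\mathcal{A}\to\{1,\dots,d\}$, $d=|\mathcal{A}|\ge3$, assumed irreducible and nondegenerate; $\alpha_{\varepsilon,j}=\pi_\varepsilon^{-1}(j)$. Rauzy induction: the top operation, with $\alpha_{\mathrm b,k}=\alpha_{\mathrm t,d}$, replaces the bottom row by $\alpha_{\mathrm b,1},\dots,\alpha_{\mathrm b,k},\alpha_{\mathrm b,d},\alpha_{\mathrm b,k+1},\dots,\alpha_{\mathrm b,d-1}$ (winner $\alpha_{\mathrm t,d}$, loser $\alpha_{\mathrm b,d}$); the bottom operation, with $\alpha_{\mathrm t,k}=\alpha_{\mathrm b,d}$, replaces the top row by $\alpha_{\mathrm t,1},\dots,\alpha_{\mathrm t,k},\alpha_{\mathrm t,d},\alpha_{\mathrm t,k+1},\dots,\alpha_{\mathrm t,d-1}$ (winner $\alpha_{\mathrm b,d}$, loser $\alpha_{\mathrm t,d}$). A Rauzy class is a connected component of the directed graph with arrows $\pi\to R_{\mathrm t}(\pi),\pi\to R_{\mathrm b}(\pi)$. $(\Omega_\pi)_{\alpha\beta}=+1$ if $\pi_{\mathrm t}(\alpha)<\pi_{\mathrm t}(\beta)$ and $\pi_{\mathrm b}(\alpha)>\pi_{\mathrm b}(\beta)$, $-1$ if the reverse inequalities hold, $0$ otherwise. For an arrow with winner $\alpha_{\mathrm w}$, loser $\alpha_{\mathrm l}$, $B_\gamma=\mathrm{Id}+E_{\alpha_{\mathrm l}\alpha_{\mathrm w}}$,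 $B_{\gamma^{-1}}=B_\gamma^{-1}$, $B_{\gamma_1\cdots\gamma_n}=B_{\gamma_n}\cdots B_{\gamma_1}$; for a walk from $\pi$ to $\pi'$, $\Omega_{\pi'}=B_\gamma\Omega_\pi B_\gamma^{\intercal}$. $\mathrm{Sp}(\Omega,\mathbb{Z})=\{S\in\mathrm{GL}(\mathbb{Z}^{\mathcal{A}}):S\Omega S^{\intercal}=\Omega\}$ acting on row vectors. With $\langle u,v\rangle=u\Omega v^{\intercal}$, the symplectic transvection along $v$ is $T_v(u)=u+\langle v,u\rangle v$; $e_\alpha$ are the canonical basis vectors. *)

theory Defs
  imports "HOL-Analysis.Analysis"
begin

text \<open>Alphabet: a finite type 'a; d = CARD('a).  A permutation is a pair
  (pi_t, pi_b) of bijections from the alphabet onto {1..d}.\<close>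

type_synonym 'a perm_pair = "('a \<Rightarrow> nat) \<times> ('a \<Rightarrow> nat)"

definition is_perm_pair :: "('a::finite) perm_pair \<Rightarrow> bool" where
  "is_perm_pair p \<longleftrightarrow>
     bij_betw (fst p) UNIV {1..CARD('a)} \<and> bij_betw (snd p) UNIV {1..CARD('a)}"

definition alpha_t :: "('a::finite) perm_pair \<Rightarrow> nat \<Rightarrow> 'a" where
  "alpha_t p j = inv (fst p) j"

definition alpha_b :: "('a::finite) perm_pair \<Rightarrow> nat \<Rightarrow> 'a" where
  "alpha_b p j = inv (snd p) j"

definition irreducible_perm :: "('a::finite) perm_pair \<Rightarrow> bool" where
  "irreducible_perm p \<longleftrightarrow>
     (\<forall>k. 1 \<le> k \<and> k < CARD('a) \<longrightarrow>
        {a. fst p a \<le> k} \<noteq> {a. snd p a \<le> k})"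

text \<open>Top Rauzy operation: with alpha_{b,k} = alpha_{t,d}, the bottom row becomes
  alpha_{b,1},...,alpha_{b,k},alpha_{b,d},alpha_{b,k+1},...,alpha_{b,d-1}.\<close>
definition rauzy_top :: "('a::finite) perm_pair \<Rightarrow> 'a perm_pair" where
  "rauzy_top p =
     (let d = CARD('a); k = snd p (alpha_t p d); l = alpha_b p d in
      (fst p, (\<lambda>b. if b = l then k + 1 else if snd p b \<le> k then snd p b else snd p b + 1)))"

text \<open>Bottom Rauzy operation: with alpha_{t,k} = alpha_{b,d}, the top row becomes
  alpha_{t,1},...,alpha_{t,k},alpha_{t,d},alpha_{t,k+1},...,alpha_{t,d-1}.\<close>
definition rauzy_bot :: "('a::finite) perm_pair \<Rightarrow> 'a perm_pair" where
  "rauzy_bot p =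
     (let d = CARD('a); k = fst p (alpha_b p d); l = alpha_t p d in
      ((\<lambda>b. if b = l then k + 1 else if fst p b \<le> k then fst p b else fst p b + 1), snd p))"

definition rauzy_op :: "bool \<Rightarrow> ('a::finite) perm_pair \<Rightarrow> 'a perm_pair" where
  "rauzy_op eps p = (if eps then rauzy_top p else rauzy_bot p)"

definition winner :: "bool \<Rightarrow> ('a::finite) perm_pair \<Rightarrow> 'a" where
  "winner eps p = (if eps then alpha_t p CARD('a) else alpha_b p CARD('a))"

definition loser :: "bool \<Rightarrow> ('a::finite) perm_pair \<Rightarrow> 'a" where
  "loser eps p = (if eps then alpha_b p CARD('a) else alpha_t p CARD('a))"

definition rauzy_arrows :: "(('a::finite) perm_pair \<times> 'a perm_pair) set" where
  "rauzy_arrows = {(p, rauzy_op eps p) | p eps. is_perm_pair p \<and> irreducible_perm p}"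

definition rauzy_class :: "('a::finite) perm_pair \<Rightarrow> 'a perm_pair set" where
  "rauzy_class p0 = {p. (p0, p) \<in> (rauzy_arrows \<union> rauzy_arrows\<inverse>)\<^sup>*}"

definition Omega :: "('a::finite) perm_pair \<Rightarrow> int^'a^'a" where
  "Omega p = (\<chi> a b.
      if fst p a < fst p b \<and> snd p a > snd p b then 1
      else if fst p a > fst p b \<and> snd p a < snd p b then -1 else 0)"

definition elem_mat :: "'a::finite \<Rightarrow> 'a \<Rightarrow> int^'a^'a" where
  "elem_mat a b = (\<chi> i j. if i = a \<and> j = b then 1 else 0)"

definition B_arrow :: "bool \<Rightarrow> ('a::finite) perm_pair \<Rightarrow> int^'a^'a" where
  "B_arrow eps p = mat 1 + elem_mat (loser eps p) (winner eps p)"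

text \<open>walk R p B q: there is a walk in R (arrows of R and their reverses) from
  p to q whose matrix B_gamma is B, with B_{gamma_1...gamma_n} = B_{gamma_n}...B_{gamma_1}
  and B_{gamma^{-1}} = B_gamma^{-1}.\<close>
inductive rauzy_walk :: "('a::finite) perm_pair set \<Rightarrow> 'a perm_pair \<Rightarrow> int^'a^'a \<Rightarrow> 'a perm_pair \<Rightarrow> bool"
  for R where
  nil: "p \<in> R \<Longrightarrow> rauzy_walk R p (mat 1) p"
| fwd: "rauzy_walk R p B q \<Longrightarrow> q \<in> R \<Longrightarrow> rauzy_op eps q \<in> R \<Longrightarrow>
        rauzy_walk R p (B_arrow eps q ** B) (rauzy_op eps q)"
| bwd: "rauzy_walk R p B q \<Longrightarrow> r \<in> R \<Longrightarrow> rauzy_op eps r = q \<Longrightarrow>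
        rauzy_walk R p (matrix_inv (B_arrow eps r) ** B) r"

text \<open>Sp(Omega, Z) (matrices acting on row vectors).\<close>
definition Sp :: "int^'a^'a \<Rightarrow> (int^'a^'a) set" where
  "Sp Om = {S. invertible S \<and> S ** Om ** transpose S = Om}"

definition symp_form :: "int^'a^'a \<Rightarrow> int^'a \<Rightarrow> int^'a \<Rightarrow> int" where
  "symp_form Om u v = (\<Sum>i\<in>UNIV. \<Sum>j\<in>UNIV. u $ i * Om $ i $ j * v $ j)"

text \<open>Symplectic transvection T_v(u) = u + <v,u> v, and its matrix (acting on
  row vectors: u v* transvection Om v = T_v(u)).\<close>
definition transv_map :: "int^'a^'a \<Rightarrow> int^'a \<Rightarrow> int^'a \<Rightarrow> int^'a" where
  "transv_map Om v u = u + symp_form Om v u *s v"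

definition transvection :: "int^'a^'a \<Rightarrow> int^'a \<Rightarrow> int^'a^'a" where
  "transvection Om v = (\<chi> i. transv_map Om v (axis i 1))"

inductive_set gen_group :: "(int^'a^'a) set \<Rightarrow> (int^'a^'a) set" for S where
  one: "mat 1 \<in> gen_group S"
| mul: "s \<in> S \<Longrightarrow> g \<in> gen_group S \<Longrightarrow> s ** g \<in> gen_group S"
| inv: "s \<in> S \<Longrightarrow> g \<in> gen_group S \<Longrightarrow> matrix_inv s ** g \<in> gen_group S"

definition transv_group :: "int^'a^'a \<Rightarrow> (int^'a^'a) set" where
  "transv_group Om = gen_group {transvection Om (axis a 1) | a. True}"

end

theory Submission
  imports Defs
begin

(* An arrow with loser l and winner w transforms Omega by the congruence with B = Id + E_lw,
  and Omega_wl = +-1 because w and l stand at the end of the two rows.  Conjugation by B sends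
  the generator T_{e_a} to the transvection along e_a B^-1, which is e_a except for a = l, where
  it is e_l - e_w.  As <e_w, e_l> = +-1, the transvection along e_l +- e_w is a conjugate of
  T_{e_l} by a power of T_{e_w}, so it lies in the transvection group.  Hence every arrow, and
  therefore every walk, conjugates G onto G'.  For Sp nothing beyond Omega' = B Omega B^T is
  needed. *)

lemma axis_vector_matrix_mult: "axis i (1::'r::semiring_1) v* M = M $ i"
  by (simp add: vec_eq_iff vector_matrix_mult_def axis_def if_distrib if_distribR sum.delta
      cong: if_cong)

lemma smult_vector_matrix_assoc:
  fixes x :: "'r::comm_semiring_1^'n"
  shows "(c *s x) v* A = c *s (x v* A)"
  by (simp add: vec_eq_iff vector_matrix_mult_def sum_distrib_left mult.assoc)

lemma matrix_eq_rowwise: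
  fixes M N :: "'r::semiring_1^'n^'m"
  assumes "\<And>x. x v* M = x v* N"
  shows "M = N"
  by (metis assms axis_vector_matrix_mult vec_eq_iff)

lemma matrix_inv_unique:
  fixes A :: "'r::semiring_1^'n^'n"
  assumes "A ** A' = mat 1" "A' ** A = mat 1"
  shows "matrix_inv A = A'"
proof -
  have "\<exists>X. A ** X = mat 1 \<and> X ** A = mat 1" using assms by blast
  then have X: "A ** matrix_inv A = mat 1 \<and> matrix_inv A ** A = mat 1"
    unfolding matrix_inv_def by (rule someI_ex)
  have "matrix_inv A = matrix_inv A ** (A ** A')" using assms by simp
  also have "\<dots> = A'" using X by (simp add: matrix_mul_assoc)
  finally show ?thesis .
qed

lemma matrix_mul_matrix_inv:
  fixes A :: "'r::semiring_1^'n^'n"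
  assumes "invertible A"
  shows "A ** matrix_inv A = mat 1" "matrix_inv A ** A = mat 1"
proof -
  have "\<exists>X. A ** X = mat 1 \<and> X ** A = mat 1" using assms unfolding invertible_def by blast
  then have "A ** matrix_inv A = mat 1 \<and> matrix_inv A ** A = mat 1"
    unfolding matrix_inv_def by (rule someI_ex)
  then show "A ** matrix_inv A = mat 1" "matrix_inv A ** A = mat 1" by auto
qed

lemma matrix_inv_mult:
  fixes A B :: "'r::semiring_1^'n^'n"
  assumes A: "invertible A" and B: "invertible B"
  shows "matrix_inv (A ** B) = matrix_inv B ** matrix_inv A"
proof (rule matrix_inv_unique)
  have "(A ** B) ** (matrix_inv B ** matrix_inv A) = A ** (B ** matrix_inv B) ** matrix_inv A"
    by (simp add: matrix_mul_assoc)
  then show "(A ** B) ** (matrix_inv B ** matrix_inv A) = mat 1"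
    by (simp add: matrix_mul_matrix_inv A B)
  have "(matrix_inv B ** matrix_inv A) ** (A ** B) = matrix_inv B ** (matrix_inv A ** A) ** B"
    by (simp add: matrix_mul_assoc)
  then show "(matrix_inv B ** matrix_inv A) ** (A ** B) = mat 1"
    by (simp add: matrix_mul_matrix_inv A B)
qed

lemma invertible_matrix_inv:
  fixes A :: "'r::semiring_1^'n^'n"
  assumes "invertible A"
  shows "invertible (matrix_inv A)" "matrix_inv (matrix_inv A) = A"
  using matrix_mul_matrix_inv[OF assms] matrix_inv_unique[of "matrix_inv A" A]
  unfolding invertible_def by blast+

lemma matrix_inv_mat_1: "matrix_inv (mat 1 :: 'r::semiring_1^'n^'n) = mat 1"
  by (rule matrix_inv_unique) simp_all

lemma invertible_mat_1: "invertible (mat 1 :: 'r::semiring_1^'n^'n)"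
  unfolding invertible_def by (intro exI[of _ "mat 1"]) simp

lemma conj_cancel:
  fixes C Ci :: "'r::semiring_1^'n^'n"
  assumes "Ci ** C = mat 1"
  shows "Ci ** (C ** S ** Ci) ** C = S"
proof -
  have "Ci ** (C ** S ** Ci) ** C = (Ci ** C) ** S ** (Ci ** C)" by (simp add: matrix_mul_assoc)
  then show ?thesis using assms by simp
qed

lemma inj_conj:
  fixes C :: "'r::semiring_1^'n^'n"
  assumes "invertible C"
  shows "inj (\<lambda>S. C ** S ** matrix_inv C)"
proof (rule injI)
  fix S T assume "C ** S ** matrix_inv C = C ** T ** matrix_inv C"
  then have "matrix_inv C ** (C ** S ** matrix_inv C) ** C
      = matrix_inv C ** (C ** T ** matrix_inv C) ** C" by simp
  then show "S = T" by (simp only: conj_cancel[OF matrix_mul_matrix_inv(2)[OF assms]])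
qed

lemma conj_image_eq:
  fixes C Ci :: "'r::semiring_1^'n^'n"
  assumes inv: "C ** Ci = mat 1" "Ci ** C = mat 1"
    and XY: "(\<lambda>S. C ** S ** Ci) ` X \<subseteq> Y" and YX: "(\<lambda>S. Ci ** S ** C) ` Y \<subseteq> X"
  shows "(\<lambda>S. C ** S ** Ci) ` X = Y"
proof
  show "Y \<subseteq> (\<lambda>S. C ** S ** Ci) ` X"
  proof
    fix S assume "S \<in> Y"
    then have "Ci ** S ** C \<in> X" using YX by blast
    moreover have "S = C ** (Ci ** S ** C) ** Ci" using conj_cancel[OF inv(1)] by simp
    ultimately show "S \<in> (\<lambda>S. C ** S ** Ci) ` X" by blast
  qed
qed (fact XY)

section \<open>The bilinear form of a matrix\<close>

lemma symp_form_eq_sum: "symp_form Om u v = (\<Sum>j\<in>UNIV. (u v* Om) $ j * v $ j)"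
  unfolding symp_form_def vector_matrix_mult_def
  by (simp add: sum_distrib_right) (rule sum.swap)

lemma sum_vector_matrix_transpose:
  "(\<Sum>j\<in>UNIV. (z v* transpose C) $ j * (y::int^'n) $ j) = (\<Sum>i\<in>UNIV. z $ i * (y v* C) $ i)"
proof -
  have "(\<Sum>j\<in>UNIV. (z v* transpose C) $ j * y $ j)
      = (\<Sum>j\<in>UNIV. \<Sum>i\<in>UNIV. z $ i * (C $ j $ i * y $ j))"
    unfolding vector_matrix_mult_def transpose_def by (simp add: sum_distrib_right mult.assoc)
  also have "\<dots> = (\<Sum>i\<in>UNIV. \<Sum>j\<in>UNIV. z $ i * (C $ j $ i * y $ j))" by (rule sum.swap)
  also have "\<dots> = (\<Sum>i\<in>UNIV. z $ i * (y v* C) $ i)"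
    unfolding vector_matrix_mult_def by (simp add: sum_distrib_left mult.commute)
  finally show ?thesis .
qed

lemma symp_form_congruence:
  fixes C Om :: "int^'n^'n"
  shows "symp_form (C ** Om ** transpose C) x y = symp_form Om (x v* C) (y v* C)"
proof -
  have "x v* (C ** Om ** transpose C) = ((x v* C) v* Om) v* transpose C"
    by (simp only: vector_matrix_mul_assoc)
  then show ?thesis unfolding symp_form_eq_sum by (simp only: sum_vector_matrix_transpose)
qed

lemma sum_mult_axis: "(\<Sum>a\<in>UNIV. g a * axis i (1::'r::semiring_1) $ a) = g i"
proof -
  have "(\<Sum>a\<in>UNIV. g a * axis i (1::'r) $ a) = (\<Sum>a\<in>UNIV. if a = i then g a else 0)"
    by (rule sum.cong) (auto simp: axis_def)
  then show ?thesis by simp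
qed

lemma sum_mult_axis_index: "(\<Sum>i\<in>UNIV. x $ i * axis i (1::'r::semiring_1) $ j) = x $ j"
proof -
  have "(\<Sum>i\<in>UNIV. x $ i * axis i (1::'r) $ j) = (\<Sum>i\<in>UNIV. if i = j then x $ i else 0)"
    by (rule sum.cong) (auto simp: axis_def)
  then show ?thesis by simp
qed

lemma symp_form_axis: "symp_form M (axis i 1) (axis j 1) = (M $ i $ j :: int)"
  unfolding symp_form_eq_sum axis_vector_matrix_mult by (simp add: sum_mult_axis)

lemma symp_form_axis_right: "symp_form Om v (axis i 1) = (v v* Om) $ i"
  unfolding symp_form_eq_sum by (simp add: sum_mult_axis)

lemma matrix_eq_symp_form:
  fixes M N :: "int^'n^'n"
  assumes "\<And>x y. symp_form M x y = symp_form N x y"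
  shows "M = N"
  by (metis assms symp_form_axis vec_eq_iff)

lemma symp_form_add_left: "symp_form Om (u + v) w = symp_form Om u w + symp_form Om v w"
  unfolding symp_form_def by (simp add: distrib_right sum.distrib)

lemma symp_form_add_right: "symp_form Om w (u + v) = symp_form Om w u + symp_form Om w v"
  unfolding symp_form_def by (simp add: distrib_left sum.distrib)

lemma symp_form_smult_left: "symp_form Om (c *s u) w = c * symp_form Om u w"
  unfolding symp_form_def by (simp add: sum_distrib_left mult_ac)

lemma symp_form_smult_right: "symp_form Om w (c *s u) = c * symp_form Om w u"
  unfolding symp_form_def by (simp add: sum_distrib_left mult_ac)

lemma symp_form_uminus: "symp_form (- Om) u w = - symp_form Om u w"
  unfolding symp_form_def by (simp add: sum_negf)

lemmas symp_form_linear =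
  symp_form_add_left symp_form_add_right symp_form_smult_left symp_form_smult_right

definition skew :: "int^'n^'n \<Rightarrow> bool" where
  "skew Om \<longleftrightarrow> (\<forall>i j. Om $ j $ i = - Om $ i $ j)"

lemma skewD: "skew Om \<Longrightarrow> Om $ j $ i = - Om $ i $ j"
  unfolding skew_def by blast

lemma skew_uminus:
  assumes "skew Om"
  shows "skew (- Om)"
  unfolding skew_def
proof (intro allI)
  fix i j
  show "(- Om) $ j $ i = - (- Om) $ i $ j" using skewD[OF assms, of j i] by simp
qed

lemma symp_form_swap:
  assumes "skew Om"
  shows "symp_form Om u v = - symp_form Om v u"
proof -
  have entry: "v $ j * Om $ j $ i * u $ i = - (u $ i * Om $ i $ j * v $ j)" for i j
    using skewD[OF assms, of j i] by (simp add: mult_ac)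
  have "symp_form Om v u = (\<Sum>i\<in>UNIV. \<Sum>j\<in>UNIV. v $ j * Om $ j $ i * u $ i)"
    unfolding symp_form_def by (rule sum.swap)
  also have "\<dots> = (\<Sum>i\<in>UNIV. \<Sum>j\<in>UNIV. - (u $ i * Om $ i $ j * v $ j))"
    by (simp only: entry)
  also have "\<dots> = - symp_form Om u v"
    unfolding symp_form_def by (simp add: sum_negf)
  finally show ?thesis by simp
qed

lemma symp_form_self: "skew Om \<Longrightarrow> symp_form Om v v = 0"
  using symp_form_swap[of Om v v] by simp

lemma skew_congruence:
  fixes C Om :: "int^'n^'n"
  assumes "skew Om"
  shows "skew (C ** Om ** transpose C)"
  unfolding skew_def
proof (intro allI)
  fix i j
  show "(C ** Om ** transpose C) $ j $ i = - (C ** Om ** transpose C) $ i $ j"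
    unfolding symp_form_axis[symmetric] symp_form_congruence by (rule symp_form_swap[OF assms])
qed

lemma congruence_cancel:
  fixes C Ci Om :: "int^'n^'n"
  assumes "Ci ** C = mat 1"
  shows "Ci ** (C ** Om ** transpose C) ** transpose Ci = Om"
proof -
  have t: "transpose C ** transpose Ci = mat 1"
    by (metis matrix_transpose_mul assms transpose_mat)
  have "Ci ** (C ** Om ** transpose C) ** transpose Ci
      = (Ci ** C) ** Om ** (transpose C ** transpose Ci)"
    by (simp add: matrix_mul_assoc)
  then show ?thesis using assms t by simp
qed

lemma Sp_conj_subset:
  fixes C Ci Om :: "int^'n^'n"
  assumes inv: "C ** Ci = mat 1" "Ci ** C = mat 1"
  shows "(\<lambda>S. C ** S ** Ci) ` Sp Om \<subseteq> Sp (C ** Om ** transpose C)"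
proof
  fix S' assume "S' \<in> (\<lambda>S. C ** S ** Ci) ` Sp Om"
  then obtain S where S': "S' = C ** S ** Ci" and "S \<in> Sp Om" by blast
  then have iS: "invertible S" and SS: "S ** Om ** transpose S = Om" unfolding Sp_def by auto
  have "invertible C" "invertible Ci" using inv unfolding invertible_def by blast+
  then have "invertible S'" unfolding S' using iS by (metis invertible_mult)
  have "S' ** (C ** Om ** transpose C) ** transpose S'
      = C ** S ** (Ci ** C) ** Om ** transpose (Ci ** C) ** transpose S ** transpose C"
    unfolding S' by (simp add: matrix_transpose_mul matrix_mul_assoc)
  also have "\<dots> = C ** (S ** Om ** transpose S) ** transpose C"
    using inv by (simp add: matrix_mul_assoc)
  finally show "S' \<in> Sp (C ** Om ** transpose C)"
    using SS \<open>invertible S'\<close> unfolding Sp_def by simp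
qed

lemma Sp_conj:
  fixes C Om :: "int^'n^'n"
  assumes "invertible C"
  shows "(\<lambda>S. C ** S ** matrix_inv C) ` Sp Om = Sp (C ** Om ** transpose C)"
proof (rule conj_image_eq[OF matrix_mul_matrix_inv[OF assms]])
  show "(\<lambda>S. C ** S ** matrix_inv C) ` Sp Om \<subseteq> Sp (C ** Om ** transpose C)"
    by (rule Sp_conj_subset[OF matrix_mul_matrix_inv[OF assms]])
  show "(\<lambda>S. matrix_inv C ** S ** C) ` Sp (C ** Om ** transpose C) \<subseteq> Sp Om"
    using Sp_conj_subset[of "matrix_inv C" C "C ** Om ** transpose C"]
    by (simp add: matrix_mul_matrix_inv[OF assms] congruence_cancel)
qed

section \<open>Transvections\<close>

lemma transvection_row: "x v* transvection Om v = transv_map Om v x"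
proof -
  have "(x v* transvection Om v) $ j = x $ j + symp_form Om v x * v $ j" for j
  proof -
    have "(x v* transvection Om v) $ j
        = (\<Sum>i\<in>UNIV. x $ i * axis i 1 $ j) + (\<Sum>i\<in>UNIV. x $ i * (v v* Om) $ i) * v $ j"
      unfolding transvection_def transv_map_def vector_matrix_mult_def[of x]
      by (simp add: symp_form_axis_right distrib_left sum.distrib sum_distrib_right
          sum_distrib_left mult_ac)
    then show ?thesis
      by (simp add: symp_form_eq_sum mult_ac sum_mult_axis_index)
  qed
  then show ?thesis unfolding transv_map_def vec_eq_iff by simp
qed

lemma transvection_conj:
  fixes C Ci Om :: "int^'n^'n"
  assumes inv: "C ** Ci = mat 1" "Ci ** C = mat 1"
  shows "C ** transvection Om v ** Ci = transvection (C ** Om ** transpose C) (v v* Ci)"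
proof (rule matrix_eq_rowwise)
  fix x :: "int^'n"
  have "x v* (C ** transvection Om v ** Ci) = transv_map Om v (x v* C) v* Ci"
    by (simp only: vector_matrix_mul_assoc[symmetric] transvection_row)
  also have "\<dots> = x + symp_form Om v (x v* C) *s (v v* Ci)"
    unfolding transv_map_def
    by (simp add: vector_matrix_left_distrib smult_vector_matrix_assoc
        vector_matrix_mul_assoc inv)
  also have "\<dots> = x v* transvection (C ** Om ** transpose C) (v v* Ci)"
    unfolding transvection_row transv_map_def
    by (simp add: symp_form_congruence vector_matrix_mul_assoc inv)
  finally show "x v* (C ** transvection Om v ** Ci)
      = x v* transvection (C ** Om ** transpose C) (v v* Ci)" .
qed

lemma transvection_preserves_form:
  fixes Om Om' :: "int^'n^'n"
  assumes sk: "skew Om" and multiple: "\<And>x. symp_form Om' v x = k * symp_form Om v x"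
  shows "transvection Om' v ** Om ** transpose (transvection Om' v) = Om"
proof (rule matrix_eq_symp_form)
  fix x y :: "int^'n"
  show "symp_form (transvection Om' v ** Om ** transpose (transvection Om' v)) x y
      = symp_form Om x y"
    unfolding symp_form_congruence transvection_row transv_map_def
    using symp_form_swap[OF sk, of x v] symp_form_swap[OF sk, of y v]
    by (simp add: symp_form_linear symp_form_self[OF sk] multiple algebra_simps)
qed

lemma transvection_uminus_right_inverse:
  fixes Om :: "int^'n^'n"
  assumes sk: "skew Om"
  shows "transvection Om v ** transvection (- Om) v = mat 1"
proof (rule matrix_eq_rowwise)
  fix x :: "int^'n"
  have "x v* (transvection Om v ** transvection (- Om) v) = x"
    unfolding vector_matrix_mul_assoc[symmetric] transvection_row transv_map_def
    by (simp add: symp_form_uminus symp_form_add_right symp_form_smult_right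
        symp_form_self[OF sk] algebra_simps) (simp add: vec_eq_iff)
  then show "x v* (transvection Om v ** transvection (- Om) v) = x v* mat 1" by simp
qed

lemma transvection_inverse:
  fixes Om :: "int^'n^'n"
  assumes sk: "skew Om"
  shows "transvection Om v ** transvection (- Om) v = mat 1"
    "transvection (- Om) v ** transvection Om v = mat 1"
    "invertible (transvection Om v)"
    "matrix_inv (transvection Om v) = transvection (- Om) v"
proof -
  show 1: "transvection Om v ** transvection (- Om) v = mat 1"
    by (rule transvection_uminus_right_inverse[OF sk])
  show 2: "transvection (- Om) v ** transvection Om v = mat 1"
    using transvection_uminus_right_inverse[OF skew_uminus[OF sk], of v] by simp
  show "invertible (transvection Om v)" unfolding invertible_def using 1 2 by blast
  show "matrix_inv (transvection Om v) = transvection (- Om) v"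
    by (rule matrix_inv_unique[OF 1 2])
qed

section \<open>Groups generated by matrices\<close>

lemma gen_group_mult: "g \<in> gen_group S \<Longrightarrow> h \<in> gen_group S \<Longrightarrow> g ** h \<in> gen_group S"
proof (induction g rule: gen_group.induct)
  case one
  then show ?case by simp
next
  case (mul s g)
  then show ?case using gen_group.mul[of s S "g ** h"] by (simp add: matrix_mul_assoc)
next
  case (inv s g)
  then show ?case using gen_group.inv[of s S "g ** h"] by (simp add: matrix_mul_assoc)
qed

lemma gen_group_generator: "s \<in> S \<Longrightarrow> s \<in> gen_group S"
  using gen_group.mul[OF _ gen_group.one, of s S] by simp

lemma gen_group_generator_inv: "s \<in> S \<Longrightarrow> matrix_inv s \<in> gen_group S"
  using gen_group.inv[OF _ gen_group.one, of s S] by simp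

lemma gen_group_matrix_inv:
  assumes invS: "\<forall>s\<in>S. invertible s" and g: "g \<in> gen_group S"
  shows "invertible g \<and> matrix_inv g \<in> gen_group S"
  using g
proof (induction g rule: gen_group.induct)
  case one
  show ?case by (simp add: invertible_mat_1 matrix_inv_mat_1 gen_group.one)
next
  case (mul s g)
  have s: "invertible s" using invS mul.hyps(1) by blast
  have "matrix_inv (s ** g) = matrix_inv g ** matrix_inv s"
    using s mul.IH by (simp add: matrix_inv_mult)
  moreover have "matrix_inv g ** matrix_inv s \<in> gen_group S"
    using gen_group_mult[OF conjunct2[OF mul.IH] gen_group_generator_inv[OF mul.hyps(1)]] .
  ultimately show ?case using invertible_mult[OF s conjunct1[OF mul.IH]] by simp
next
  case (inv s g)
  have s: "invertible s" using invS inv.hyps(1) by blast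
  have "matrix_inv (matrix_inv s ** g) = matrix_inv g ** s"
    using s inv.IH by (simp add: matrix_inv_mult invertible_matrix_inv)
  moreover have "matrix_inv g ** s \<in> gen_group S"
    using gen_group_mult[OF conjunct2[OF inv.IH] gen_group_generator[OF inv.hyps(1)]] .
  ultimately show ?case
    using invertible_mult[OF invertible_matrix_inv(1)[OF s] conjunct1[OF inv.IH]] by simp
qed

lemma gen_group_least:
  assumes invT: "\<forall>s\<in>T. invertible s" and ST: "S \<subseteq> gen_group T"
  shows "gen_group S \<subseteq> gen_group T"
proof
  fix g assume "g \<in> gen_group S"
  then show "g \<in> gen_group T"
  proof (induction g rule: gen_group.induct)
    case one
    show ?case by (rule gen_group.one)
  next
    case (mul s g)
    show ?case using ST mul gen_group_mult by blast
  next
    case (inv s g)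
    have "matrix_inv s \<in> gen_group T" using ST inv.hyps(1) gen_group_matrix_inv[OF invT] by blast
    then show ?case using inv.IH by (rule gen_group_mult)
  qed
qed

lemma conj_mult:
  fixes C Ci :: "'r::semiring_1^'n^'n"
  assumes "Ci ** C = mat 1"
  shows "C ** (s ** g) ** Ci = (C ** s ** Ci) ** (C ** g ** Ci)"
proof -
  have "(C ** s ** Ci) ** (C ** g ** Ci) = C ** s ** (Ci ** C) ** g ** Ci"
    by (simp add: matrix_mul_assoc)
  then show ?thesis using assms by (simp add: matrix_mul_assoc)
qed

lemma gen_group_conj:
  fixes C Ci :: "int^'n^'n"
  assumes invS: "\<forall>s\<in>S. invertible s" and CCi: "C ** Ci = mat 1" "Ci ** C = mat 1"
    and g: "g \<in> gen_group S"
  shows "C ** g ** Ci \<in> gen_group ((\<lambda>s. C ** s ** Ci) ` S)"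
  using g
proof (induction g rule: gen_group.induct)
  case one
  show ?case using CCi(1) gen_group.one by simp
next
  case (mul s g)
  show ?case
    unfolding conj_mult[OF CCi(2)] using imageI[OF mul.hyps(1)] mul.IH by (rule gen_group.mul)
next
  case (inv s g)
  have eq: "matrix_inv (C ** s ** Ci) = C ** matrix_inv s ** Ci"
  proof (rule matrix_inv_unique)
    have s: "s ** matrix_inv s = mat 1" "matrix_inv s ** s = mat 1"
      using invS inv.hyps(1) matrix_mul_matrix_inv by blast+
    show "(C ** s ** Ci) ** (C ** matrix_inv s ** Ci) = mat 1"
      unfolding conj_mult[OF CCi(2), symmetric] s using CCi by simp
    show "(C ** matrix_inv s ** Ci) ** (C ** s ** Ci) = mat 1"
      unfolding conj_mult[OF CCi(2), symmetric] s using CCi by simp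
  qed
  have "matrix_inv (C ** s ** Ci) ** (C ** g ** Ci) \<in> gen_group ((\<lambda>s. C ** s ** Ci) ` S)"
    by (rule gen_group.inv[OF imageI[OF inv.hyps(1)] inv.IH])
  then show ?case unfolding conj_mult[OF CCi(2)] eq .
qed

lemma transvections_invertible:
  "skew Om \<Longrightarrow> \<forall>s\<in>{transvection Om (axis a 1) | a. True}. invertible s"
  using transvection_inverse(3) by blast

lemma transv_group_mult:
  "g \<in> transv_group Om \<Longrightarrow> h \<in> transv_group Om \<Longrightarrow> g ** h \<in> transv_group Om"
  unfolding transv_group_def by (rule gen_group_mult)

lemma transvection_in_transv_group: "transvection Om (axis a 1) \<in> transv_group Om"
  unfolding transv_group_def by (rule gen_group_generator) blast

lemma transvection_inv_in_transv_group: "matrix_inv (transvection Om (axis a 1)) \<in> transv_group Om"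
  unfolding transv_group_def by (rule gen_group_generator_inv) blast

text \<open>Conjugating the generator along e_l by the generator along e_w or by its inverse
  yields the transvection along e_l + e_w or e_l - e_w.\<close>

lemma transvection_axis_sum_in_transv_group:
  fixes Om :: "int^'n^'n"
  assumes sk: "skew Om" and unit: "\<bar>Om $ w $ l\<bar> = 1" and c: "\<bar>c\<bar> = 1"
  shows "transvection Om (axis l 1 + c *s axis w 1) \<in> transv_group Om"
proof -
  define T where "T = transvection Om (axis w (1::int))"
  define Ti where "Ti = transvection (- Om) (axis w (1::int))"
  have inv: "T ** Ti = mat 1" "Ti ** T = mat 1" "matrix_inv T = Ti"
    unfolding T_def Ti_def using transvection_inverse[OF sk] by auto
  have "T ** Om ** transpose T = Om" unfolding T_def
    by (rule transvection_preserves_form[OF sk, where k = 1]) simp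
  then have "T ** transvection Om (axis l 1) ** Ti
      = transvection Om (axis l 1 + (- Om $ w $ l) *s axis w 1)"
    using transvection_conj[OF inv(1,2), of Om "axis l 1"]
    unfolding Ti_def transvection_row transv_map_def by (simp add: symp_form_uminus symp_form_axis)
  moreover have "Ti ** Om ** transpose Ti = Om" unfolding Ti_def
    by (rule transvection_preserves_form[OF sk, where k = "-1"]) (simp add: symp_form_uminus)
  then have "Ti ** transvection Om (axis l 1) ** T
      = transvection Om (axis l 1 + (Om $ w $ l) *s axis w 1)"
    using transvection_conj[OF inv(2,1), of Om "axis l 1"]
    unfolding T_def transvection_row transv_map_def by (simp add: symp_form_axis)
  moreover have "T \<in> transv_group Om" "Ti \<in> transv_group Om"
    using transvection_in_transv_group transvection_inv_in_transv_group[of Om w] inv(3)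
    unfolding T_def by simp_all
  then have "T ** transvection Om (axis l 1) ** Ti \<in> transv_group Om"
    "Ti ** transvection Om (axis l 1) ** T \<in> transv_group Om"
    by (simp_all add: transv_group_mult transvection_in_transv_group)
  moreover have "c = - Om $ w $ l \<or> c = Om $ w $ l" using unit c by arith
  ultimately show ?thesis by (elim disjE) simp_all
qed

lemma transv_group_conj_subset:
  fixes C Ci Om :: "int^'n^'n"
  assumes sk: "skew Om" and inv: "C ** Ci = mat 1" "Ci ** C = mat 1"
    and gens: "\<And>a. transvection (C ** Om ** transpose C) (axis a 1 v* Ci)
                  \<in> transv_group (C ** Om ** transpose C)"
  shows "(\<lambda>g. C ** g ** Ci) ` transv_group Om \<subseteq> transv_group (C ** Om ** transpose C)"
proof -
  define Om' where "Om' = C ** Om ** transpose C"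
  have "(\<lambda>s. C ** s ** Ci) ` {transvection Om (axis a 1) | a. True}
      = {transvection Om' (axis a 1 v* Ci) | a. True}"
    unfolding Om'_def transvection_conj[OF inv, symmetric] by blast
  then have "(\<lambda>g. C ** g ** Ci) ` transv_group Om
      \<subseteq> gen_group {transvection Om' (axis a 1 v* Ci) | a. True}"
    using gen_group_conj[OF transvections_invertible[OF sk] inv]
    unfolding transv_group_def by (simp add: image_subset_iff)
  also have "\<dots> \<subseteq> transv_group Om'"
  proof -
    have "skew Om'" unfolding Om'_def by (rule skew_congruence[OF sk])
    moreover have "{transvection Om' (axis a 1 v* Ci) | a. True}
        \<subseteq> gen_group {transvection Om' (axis a 1) | a. True}"
      using gens unfolding Om'_def[symmetric] transv_group_def by blast
    ultimately show ?thesis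
      unfolding transv_group_def by (rule gen_group_least[OF transvections_invertible])
  qed
  finally show ?thesis unfolding Om'_def .
qed

section \<open>Congruences that conjugate the transvection groups\<close>

definition transv_congruence :: "int^'n^'n \<Rightarrow> int^'n^'n \<Rightarrow> int^'n^'n \<Rightarrow> bool" where
  "transv_congruence C Om Om' \<longleftrightarrow> invertible C \<and> Om' = C ** Om ** transpose C
     \<and> (\<lambda>g. C ** g ** matrix_inv C) ` transv_group Om = transv_group Om'"

lemma transv_congruence_mat_1: "transv_congruence (mat 1) Om Om"
  unfolding transv_congruence_def by (simp add: invertible_mat_1 matrix_inv_mat_1)

lemma transv_congruence_mult:
  assumes C: "transv_congruence C Om1 Om2" and D: "transv_congruence D Om2 Om3"
  shows "transv_congruence (D ** C) Om1 Om3"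
proof -
  have iC: "invertible C" and Om2: "Om2 = C ** Om1 ** transpose C"
    and G2: "(\<lambda>g. C ** g ** matrix_inv C) ` transv_group Om1 = transv_group Om2"
    using C unfolding transv_congruence_def by auto
  have iD: "invertible D" and Om3: "Om3 = D ** Om2 ** transpose D"
    and G3: "(\<lambda>g. D ** g ** matrix_inv D) ` transv_group Om2 = transv_group Om3"
    using D unfolding transv_congruence_def by auto
  have "(\<lambda>g. (D ** C) ** g ** matrix_inv (D ** C)) ` transv_group Om1
      = (\<lambda>g. D ** g ** matrix_inv D) ` (\<lambda>g. C ** g ** matrix_inv C) ` transv_group Om1"
    by (simp add: image_image matrix_inv_mult[OF iD iC] matrix_mul_assoc)
  also have "\<dots> = transv_group Om3" unfolding G2 G3 ..
  moreover have "Om3 = (D ** C) ** Om1 ** transpose (D ** C)"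
    unfolding Om3 Om2 by (simp add: matrix_transpose_mul matrix_mul_assoc)
  ultimately show ?thesis
    unfolding transv_congruence_def using invertible_mult[OF iD iC] by blast
qed

lemma transv_congruence_matrix_inv:
  assumes C: "transv_congruence C Om Om'"
  shows "transv_congruence (matrix_inv C) Om' Om"
proof -
  have iC: "invertible C" and Om': "Om' = C ** Om ** transpose C"
    and G: "(\<lambda>g. C ** g ** matrix_inv C) ` transv_group Om = transv_group Om'"
    using C unfolding transv_congruence_def by auto
  note CCi = matrix_mul_matrix_inv[OF iC]
  have "(\<lambda>g. matrix_inv C ** g ** matrix_inv (matrix_inv C)) ` transv_group Om'
      = transv_group Om"
    unfolding G[symmetric] image_image invertible_matrix_inv(2)[OF iC] conj_cancel[OF CCi(2)]
    by simp
  moreover have "Om = matrix_inv C ** Om' ** transpose (matrix_inv C)"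
    unfolding Om' congruence_cancel[OF CCi(2)] ..
  ultimately show ?thesis
    unfolding transv_congruence_def using invertible_matrix_inv(1)[OF iC] by blast
qed

lemma vector_matrix_elem_mat: "x v* elem_mat l w = (x $ l) *s axis w (1::int)"
proof -
  have "(x v* elem_mat l w) $ j = (if j = w then x $ l else 0)" for j
    unfolding vector_matrix_mult_def elem_mat_def by (simp add: if_distrib cong: if_cong)
  then show ?thesis by (simp add: vec_eq_iff axis_def)
qed

lemma axis_vector_matrix_elementary:
  fixes l w :: "'n::finite"
  shows "axis a 1 v* (mat 1 + elem_mat l w)
      = axis a 1 + (if a = l then 1 else 0) *s axis w (1::int)"
    "axis a 1 v* (mat 1 - elem_mat l w)
      = axis a 1 + (if a = l then -1 else 0) *s axis w (1::int)"
  by (auto simp: vector_matrix_mult_add_rdistrib vector_matrix_mult_diff_rdistrib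
      vector_matrix_elem_mat vec_eq_iff axis_def)

lemma elementary_matrix_inverse:
  fixes l w :: "'n::finite"
  assumes "l \<noteq> w"
  shows "(mat 1 + elem_mat l w) ** (mat 1 - elem_mat l w) = (mat 1 :: int^'n^'n)"
    "(mat 1 - elem_mat l w) ** (mat 1 + elem_mat l w) = (mat 1 :: int^'n^'n)"
  using assms
  by (auto intro!: matrix_eq_rowwise simp: vector_matrix_mul_assoc[symmetric]
      vector_matrix_mult_add_rdistrib vector_matrix_mult_diff_rdistrib vector_matrix_elem_mat
      axis_def)

lemma elementary_congruence_entry:
  fixes M :: "int^'n^'n"
  shows "((mat 1 + elem_mat l w) ** M ** transpose (mat 1 + elem_mat l w)) $ a $ b =
    M $ a $ b + (if a = l then M $ w $ b else 0) + (if b = l then M $ a $ w else 0)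
    + (if a = l \<and> b = l then M $ w $ w else 0)"
  unfolding symp_form_axis[symmetric] symp_form_congruence axis_vector_matrix_elementary
  by (simp add: symp_form_linear symp_form_axis)

lemma transv_congruence_elementary:
  fixes Om :: "int^'n^'n"
  assumes sk: "skew Om" and lw: "l \<noteq> w" and unit: "\<bar>Om $ w $ l\<bar> = 1"
  shows "transv_congruence (mat 1 + elem_mat l w) Om
           ((mat 1 + elem_mat l w) ** Om ** transpose (mat 1 + elem_mat l w))"
proof -
  define A where "A = (mat 1 + elem_mat l w :: int^'n^'n)"
  define Ai where "Ai = (mat 1 - elem_mat l w :: int^'n^'n)"
  define Om' where "Om' = A ** Om ** transpose A"
  have inv: "A ** Ai = mat 1" "Ai ** A = mat 1"
    unfolding A_def Ai_def using elementary_matrix_inverse[OF lw] by auto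
  have sk': "skew Om'" unfolding Om'_def by (rule skew_congruence[OF sk])
  have Om: "Om = Ai ** Om' ** transpose Ai"
    unfolding Om'_def using congruence_cancel[OF inv(2)] ..
  have "Om $ w $ w = - Om $ w $ w" by (rule skewD[OF sk])
  then have unit': "\<bar>Om' $ w $ l\<bar> = 1"
    unfolding Om'_def A_def elementary_congruence_entry using lw unit by simp
  have "(\<lambda>g. A ** g ** Ai) ` transv_group Om \<subseteq> transv_group Om'"
    unfolding Om'_def
  proof (rule transv_group_conj_subset[OF sk inv])
    show "transvection (A ** Om ** transpose A) (axis a 1 v* Ai)
        \<in> transv_group (A ** Om ** transpose A)" for a
      using transvection_axis_sum_in_transv_group[OF sk' unit', of "-1"]
        transvection_in_transv_group
      unfolding Om'_def Ai_def axis_vector_matrix_elementary by (cases "a = l") simp_all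
  qed
  moreover have "(\<lambda>g. Ai ** g ** A) ` transv_group Om'
      \<subseteq> transv_group (Ai ** Om' ** transpose Ai)"
  proof (rule transv_group_conj_subset[OF sk' inv(2,1)])
    show "transvection (Ai ** Om' ** transpose Ai) (axis a 1 v* A)
        \<in> transv_group (Ai ** Om' ** transpose Ai)" for a
      using transvection_axis_sum_in_transv_group[OF sk unit, of 1] transvection_in_transv_group
      unfolding Om[symmetric] A_def axis_vector_matrix_elementary by (cases "a = l") simp_all
  qed
  ultimately have "(\<lambda>g. A ** g ** Ai) ` transv_group Om = transv_group Om'"
    unfolding Om[symmetric] by (rule conj_image_eq[OF inv])
  moreover have "invertible A" "matrix_inv A = Ai"
    using inv matrix_inv_unique unfolding invertible_def by blast+
  ultimately show ?thesis unfolding transv_congruence_def Om'_def A_def by simp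
qed

section \<open>Rauzy induction\<close>

text \<open>Weaker than irreducibility but, unlike it, easily seen to be preserved by both Rauzy
  operations; it is all that the argument needs.\<close>

definition distinct_last_letters :: "('a::finite) perm_pair \<Rightarrow> bool" where
  "distinct_last_letters p \<longleftrightarrow>
     is_perm_pair p \<and> (\<forall>a. fst p a = CARD('a) \<longrightarrow> snd p a \<noteq> CARD('a))"

lemma bij_betw_interval_facts:
  fixes f :: "'a::finite \<Rightarrow> nat"
  assumes "bij_betw f UNIV {1..CARD('a)}"
  shows "inj f" "\<And>a. 1 \<le> f a" "\<And>a. f a \<le> CARD('a)" "f (inv f CARD('a)) = CARD('a)"
proof -
  show "inj f" using assms bij_betw_def by blast
  show "1 \<le> f a" "f a \<le> CARD('a)" for a using assms bij_betwE by fastforce+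
  have "CARD('a) \<in> {1..CARD('a)}" using finite_UNIV_card_ge_0[where 'a='a] by simp
  then show "f (inv f CARD('a)) = CARD('a)" using bij_betw_inv_into_right[OF assms] by simp
qed

lemma bij_betw_interval_if_inj:
  fixes f :: "'a::finite \<Rightarrow> nat"
  assumes "inj f" "\<And>a. 1 \<le> f a" "\<And>a. f a \<le> CARD('a)"
  shows "bij_betw f UNIV {1..CARD('a)}"
proof -
  have sub: "range f \<subseteq> {1..CARD('a)}" using assms by auto
  have "card (range f) = CARD('a)" using assms(1) card_image by blast
  then have "range f = {1..CARD('a)}" using card_subset_eq[OF _ sub] by simp
  then show ?thesis using assms(1) unfolding bij_betw_def by simp
qed

lemma skew_Omega: "skew (Omega p)"
  unfolding skew_def Omega_def by auto

text \<open>The bottom row after moving letter l from the last position d to the position right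
  after the letter w, which sits last in the top row.\<close>

lemma Omega_move_after_entry:
  fixes t s :: "'a::finite \<Rightarrow> nat"
  assumes iT: "inj t" and iS: "inj s" and sd: "\<And>a. s a \<le> d" and td: "\<And>a. t a \<le> d"
    and tw: "t w = d" and sl: "s l = d" and lw: "l \<noteq> w" and k: "k = s w"
  shows "Omega (t, (\<lambda>b. if b = l then k + 1 else if s b \<le> k then s b else s b + 1)) $ a $ b =
    Omega (t, s) $ a $ b + (if a = l then Omega (t, s) $ w $ b else 0)
    + (if b = l then Omega (t, s) $ a $ w else 0)
    + (if a = l \<and> b = l then Omega (t, s) $ w $ w else 0)"
proof -
  have tl: "t l < d" and sw: "s w < d" using iT iS tw sl td sd lw le_neq_implies_less injD by metis+
  have tx: "x \<noteq> w \<Longrightarrow> t x < d" and sx: "x \<noteq> l \<Longrightarrow> s x < d" for x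
    using iT iS tw sl td sd le_neq_implies_less injD by metis+
  have tne: "x \<noteq> y \<Longrightarrow> t x \<noteq> t y" and sne: "x \<noteq> y \<Longrightarrow> s x \<noteq> s y" for x y
    using iT iS injD by metis+
  consider "a = l" "b = l" | "a = l" "b = w" | "a = l" "b \<noteq> l" "b \<noteq> w"
    | "a \<noteq> l" "b = l" "a = w" | "a \<noteq> l" "b = l" "a \<noteq> w" | "a \<noteq> l" "b \<noteq> l"
    by blast
  then show ?thesis
  proof cases
    case 3
    then have "t b < d" "s b < d" "t b \<noteq> t l" "s b \<noteq> s w" using tx sx tne sne by metis+
    then show ?thesis using 3 tl sw tw sl k unfolding Omega_def by auto
  next
    case 5
    then have "t a < d" "s a < d" "t a \<noteq> t l" "s a \<noteq> s w" using tx sx tne sne by metis+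
    then show ?thesis using 5 tl sw tw sl k unfolding Omega_def by auto
  next
    case 6
    then show ?thesis using sx unfolding Omega_def by auto
  qed (use tl sw tw sl k lw in \<open>simp_all add: Omega_def\<close>)
qed

lemma rauzy_top_struct:
  fixes p :: "('a::finite) perm_pair"
  assumes "distinct_last_letters p"
  defines "w \<equiv> alpha_t p CARD('a)" and "l \<equiv> alpha_b p CARD('a)"
  shows "fst p w = CARD('a)" "snd p l = CARD('a)" "l \<noteq> w" "snd p w < CARD('a)"
    "rauzy_top p = (fst p, (\<lambda>b. if b = l then snd p w + 1
                               else if snd p b \<le> snd p w then snd p b else snd p b + 1))"
    "winner True p = w" "loser True p = l"
proof -
  have bt: "bij_betw (fst p) UNIV {1..CARD('a)}" and bs: "bij_betw (snd p) UNIV {1..CARD('a)}"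
    and c: "\<forall>a. fst p a = CARD('a) \<longrightarrow> snd p a \<noteq> CARD('a)"
    using assms(1) unfolding distinct_last_letters_def is_perm_pair_def by auto
  show fw: "fst p w = CARD('a)"
    unfolding w_def alpha_t_def using bij_betw_interval_facts(4)[OF bt] .
  show sl: "snd p l = CARD('a)"
    unfolding l_def alpha_b_def using bij_betw_interval_facts(4)[OF bs] .
  show "l \<noteq> w" using fw sl c by metis
  show "snd p w < CARD('a)"
    using c fw bij_betw_interval_facts(3)[OF bs, of w] by (metis le_neq_implies_less)
  show "rauzy_top p = (fst p, (\<lambda>b. if b = l then snd p w + 1
                               else if snd p b \<le> snd p w then snd p b else snd p b + 1))"
    unfolding rauzy_top_def w_def l_def Let_def by simp
  show "winner True p = w" "loser True p = l" unfolding winner_def loser_def w_def l_def by simp_all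
qed

lemma Omega_rauzy_top:
  fixes p :: "('a::finite) perm_pair"
  assumes "distinct_last_letters p"
  shows "Omega (rauzy_top p) = B_arrow True p ** Omega p ** transpose (B_arrow True p)"
proof -
  note st = rauzy_top_struct[OF assms]
  have bt: "bij_betw (fst p) UNIV {1..CARD('a)}" and bs: "bij_betw (snd p) UNIV {1..CARD('a)}"
    using assms unfolding distinct_last_letters_def is_perm_pair_def by auto
  note entry = Omega_move_after_entry[OF bij_betw_interval_facts(1)[OF bt]
      bij_betw_interval_facts(1)[OF bs] bij_betw_interval_facts(3)[OF bs]
      bij_betw_interval_facts(3)[OF bt] st(1) st(2) st(3) refl]
  show ?thesis
    unfolding vec_eq_iff B_arrow_def elementary_congruence_entry st(5,6,7)
    using entry by simp
qed

lemma distinct_last_letters_rauzy_top: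
  fixes p :: "('a::finite) perm_pair"
  assumes "distinct_last_letters p"
  shows "distinct_last_letters (rauzy_top p)"
proof -
  note st = rauzy_top_struct[OF assms]
  define w where "w = alpha_t p CARD('a)"
  define l where "l = alpha_b p CARD('a)"
  define k where "k = snd p w"
  have bt: "bij_betw (fst p) UNIV {1..CARD('a)}" and bs: "bij_betw (snd p) UNIV {1..CARD('a)}"
    using assms unfolding distinct_last_letters_def is_perm_pair_def by auto
  have fw: "fst p w = CARD('a)" and sl: "snd p l = CARD('a)" and lw: "l \<noteq> w"
    and kd: "k < CARD('a)"
    using st unfolding w_def l_def k_def by auto
  define s' where "s' = (\<lambda>b. if b = l then k + 1 else if snd p b \<le> k then snd p b else snd p b + 1)"
  have rt: "rauzy_top p = (fst p, s')" using st(5) unfolding s'_def k_def w_def l_def by simp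
  have sx: "x \<noteq> l \<Longrightarrow> snd p x < CARD('a)" for x
    using bij_betw_interval_facts(1,3)[OF bs] sl le_neq_implies_less injD by metis
  have sne: "x \<noteq> y \<Longrightarrow> snd p x \<noteq> snd p y" for x y
    using bij_betw_interval_facts(1)[OF bs] injD by metis
  have tx: "fst p x = CARD('a) \<Longrightarrow> x = w" for x
    using bij_betw_interval_facts(1)[OF bt] fw injD by metis
  have "inj s'"
  proof (rule injI, rule ccontr)
    fix x y assume "s' x = s' y" "x \<noteq> y"
    then show False using sne sx[of x] sx[of y] unfolding s'_def by (auto split: if_splits)
  qed
  moreover have "1 \<le> s' a" "s' a \<le> CARD('a)" for a
    using bij_betw_interval_facts(2)[OF bs, of a] kd sx[of a] unfolding s'_def by auto
  ultimately have "bij_betw s' UNIV {1..CARD('a)}" by (rule bij_betw_interval_if_inj)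
  moreover have "s' a \<noteq> CARD('a)" if "fst p a = CARD('a)" for a
    using tx[OF that] lw kd unfolding s'_def k_def by auto
  ultimately show ?thesis
    using bt unfolding distinct_last_letters_def is_perm_pair_def rt by simp
qed

lemma Omega_winner_loser_top:
  fixes p :: "('a::finite) perm_pair"
  assumes "distinct_last_letters p"
  shows "Omega p $ winner True p $ loser True p = -1"
proof -
  note st = rauzy_top_struct[OF assms]
  have bt: "bij_betw (fst p) UNIV {1..CARD('a)}"
    using assms unfolding distinct_last_letters_def is_perm_pair_def by auto
  have "fst p (alpha_b p CARD('a)) < CARD('a)"
    using bij_betw_interval_facts(1,3)[OF bt] st(1) st(3) le_neq_implies_less injD by metis
  then show ?thesis unfolding st(6) st(7) Omega_def using st(1,2,4) by simp
qed

definition swap_rows :: "'x perm_pair \<Rightarrow> 'x perm_pair" where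
  "swap_rows p = (snd p, fst p)"

lemma Omega_swap_rows: "Omega (swap_rows p) = - Omega p"
  unfolding vec_eq_iff Omega_def swap_rows_def by auto

lemma rauzy_bot_eq_swap_rows: "rauzy_bot p = swap_rows (rauzy_top (swap_rows p))"
  by (cases p) (simp add: rauzy_bot_def rauzy_top_def swap_rows_def alpha_t_def alpha_b_def
      Let_def cong: if_cong)

lemma winner_loser_swap_rows:
  "winner False p = winner True (swap_rows p)" "loser False p = loser True (swap_rows p)"
  unfolding winner_def loser_def swap_rows_def alpha_t_def alpha_b_def by simp_all

lemma B_arrow_swap_rows: "B_arrow False p = B_arrow True (swap_rows p)"
  unfolding B_arrow_def winner_loser_swap_rows ..

lemma distinct_last_letters_swap_rows:
  "distinct_last_letters p \<Longrightarrow> distinct_last_letters (swap_rows p)"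
  unfolding distinct_last_letters_def is_perm_pair_def swap_rows_def by auto

lemma distinct_last_letters_rauzy_op:
  "distinct_last_letters p \<Longrightarrow> distinct_last_letters (rauzy_op eps p)"
  unfolding rauzy_op_def rauzy_bot_eq_swap_rows
  by (simp add: distinct_last_letters_rauzy_top distinct_last_letters_swap_rows)

lemma loser_neq_winner:
  "distinct_last_letters p \<Longrightarrow> loser eps p \<noteq> winner eps p"
  by (cases eps) (simp_all add: winner_loser_swap_rows rauzy_top_struct(3,6,7)
      distinct_last_letters_swap_rows)

lemma abs_Omega_winner_loser:
  "distinct_last_letters p \<Longrightarrow> \<bar>Omega p $ winner eps p $ loser eps p\<bar> = 1"
  using Omega_winner_loser_top[of p] Omega_winner_loser_top[of "swap_rows p"]
  by (cases eps) (simp_all add: winner_loser_swap_rows Omega_swap_rows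
      distinct_last_letters_swap_rows)

lemma Omega_rauzy_op:
  assumes "distinct_last_letters p"
  shows "Omega (rauzy_op eps p) = B_arrow eps p ** Omega p ** transpose (B_arrow eps p)"
proof (cases eps)
  case True
  then show ?thesis using Omega_rauzy_top[OF assms] by (simp add: rauzy_op_def)
next
  case False
  have "Omega (rauzy_op eps p) = - Omega (rauzy_top (swap_rows p))"
    using False by (simp add: rauzy_op_def rauzy_bot_eq_swap_rows Omega_swap_rows)
  also have "\<dots> = - (B_arrow eps p ** Omega (swap_rows p) ** transpose (B_arrow eps p))"
    using False Omega_rauzy_top[OF distinct_last_letters_swap_rows[OF assms]]
    by (simp add: B_arrow_swap_rows)
  also have "\<dots> = B_arrow eps p ** Omega p ** transpose (B_arrow eps p)"
    unfolding B_arrow_def vec_eq_iff Omega_swap_rows by (simp add: elementary_congruence_entry)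
  finally show ?thesis .
qed

lemma transv_congruence_rauzy_op:
  assumes "distinct_last_letters p"
  shows "transv_congruence (B_arrow eps p) (Omega p) (Omega (rauzy_op eps p))"
  unfolding Omega_rauzy_op[OF assms] B_arrow_def
  by (rule transv_congruence_elementary[OF skew_Omega loser_neq_winner[OF assms]
        abs_Omega_winner_loser[OF assms]])

lemma distinct_last_letters_if_irreducible:
  fixes p :: "('a::finite) perm_pair"
  assumes pp: "is_perm_pair p" and irr: "irreducible_perm p" and c: "CARD('a) \<ge> 2"
  shows "distinct_last_letters p"
proof -
  have bt: "bij_betw (fst p) UNIV {1..CARD('a)}" and bs: "bij_betw (snd p) UNIV {1..CARD('a)}"
    using pp unfolding is_perm_pair_def by auto
  have "snd p a \<noteq> CARD('a)" if fa: "fst p a = CARD('a)" for a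
  proof
    assume sa: "snd p a = CARD('a)"
    have ne: "fst p x \<noteq> CARD('a)" "snd p x \<noteq> CARD('a)" if "x \<noteq> a" for x
      using that fa sa injD[OF bij_betw_interval_facts(1)[OF bt], of x a]
        injD[OF bij_betw_interval_facts(1)[OF bs], of x a] by metis+
    have "fst p x \<le> CARD('a) - 1 \<longleftrightarrow> x \<noteq> a" "snd p x \<le> CARD('a) - 1 \<longleftrightarrow> x \<noteq> a" for x
      using bij_betw_interval_facts(3)[OF bt, of x] bij_betw_interval_facts(3)[OF bs, of x]
        fa sa c ne[of x] by (cases "x = a"; simp; linarith)+
    then have "{x. fst p x \<le> CARD('a) - 1} = {x. snd p x \<le> CARD('a) - 1}" by auto
    moreover have "1 \<le> CARD('a) - 1" "CARD('a) - 1 < CARD('a)" using c by auto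
    ultimately show False using irr unfolding irreducible_perm_def by blast
  qed
  then show ?thesis using pp unfolding distinct_last_letters_def by simp
qed

lemma distinct_last_letters_rauzy_class:
  fixes p0 :: "('a::finite) perm_pair"
  assumes "is_perm_pair p0" "irreducible_perm p0" "CARD('a) \<ge> 2" and "p \<in> rauzy_class p0"
  shows "distinct_last_letters p"
proof -
  have "(p0, p) \<in> (rauzy_arrows \<union> rauzy_arrows\<inverse>)\<^sup>*"
    using assms(4) unfolding rauzy_class_def by simp
  then show ?thesis
  proof (induction rule: rtrancl_induct)
    case base
    then show ?case using distinct_last_letters_if_irreducible assms(1-3) .
  next
    case (step y z)
    show ?case
    proof (cases "(y, z) \<in> rauzy_arrows")
      case True
      then obtain eps where "z = rauzy_op eps y" unfolding rauzy_arrows_def by blast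
      then show ?thesis using distinct_last_letters_rauzy_op step.IH by simp
    next
      case False
      then have "(z, y) \<in> rauzy_arrows" using step.hyps(2) by blast
      then have "is_perm_pair z" "irreducible_perm z" unfolding rauzy_arrows_def by auto
      then show ?thesis using distinct_last_letters_if_irreducible assms(3) by blast
    qed
  qed
qed

lemma transv_congruence_rauzy_walk:
  assumes R: "\<forall>x\<in>R. distinct_last_letters x" and w: "rauzy_walk R p B q"
  shows "transv_congruence B (Omega p) (Omega q)"
  using w
proof (induction rule: rauzy_walk.induct)
  case (nil p)
  show ?case by (rule transv_congruence_mat_1)
next
  case (fwd p B q eps)
  then show ?case using transv_congruence_mult transv_congruence_rauzy_op R by blast
next
  case (bwd p B q r eps)
  then show ?case
    using transv_congruence_mult transv_congruence_matrix_inv transv_congruence_rauzy_op R by blast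
qed

theorem lemma2p7:
  fixes p0 p p' :: "('a::finite) perm_pair" and B :: "int^'a^'a"
  assumes "CARD('a) \<ge> 3"
    and "is_perm_pair p0" and "irreducible_perm p0"
    and "p \<in> rauzy_class p0" and "p' \<in> rauzy_class p0"
    and "rauzy_walk (rauzy_class p0) p B p'"
  shows "bij_betw (\<lambda>S. B ** S ** matrix_inv B) (Sp (Omega p)) (Sp (Omega p'))
       \<and> bij_betw (\<lambda>S. B ** S ** matrix_inv B)
            (transv_group (Omega p)) (transv_group (Omega p'))"
proof -
  have "\<forall>x\<in>rauzy_class p0. distinct_last_letters x"
    using distinct_last_letters_rauzy_class[OF assms(2,3)] assms(1) by simp
  then have "transv_congruence B (Omega p) (Omega p')"
    using transv_congruence_rauzy_walk assms(6) by blast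
  then have B: "invertible B" and "Omega p' = B ** Omega p ** transpose B"
    and "(\<lambda>S. B ** S ** matrix_inv B) ` transv_group (Omega p) = transv_group (Omega p')"
    unfolding transv_congruence_def by auto
  moreover have "inj_on (\<lambda>S. B ** S ** matrix_inv B) X" for X
    using inj_conj[OF B] by (rule inj_on_subset) simp
  ultimately show ?thesis using Sp_conj[OF B] by (simp add: bij_betw_def)
qed

end
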